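(* Let $G$ be a graph. Then for every induced subgraph $H$ of $G$, \[\chi(G) \leq \frac{1}{2} \left(\omega(G) + \Delta(G) + 1 \right) + \frac{5\kappa(\overline{G}) + 3\chi(H) - |H|}{4}.\]
   Context: All graphs are finite and simple with non-empty vertex set; induced subgraphs have non-empty vertex set. $|G|$ denotes the number of vertices, $\chi$ the chromatic number, $\omega$ the clique number, $\Delta$ the maximum degree. $\overline{G}$ is the complement of $G$, and $\kappa(\overline{G})$ is its vertex connectivity: the minimum size of a set $K$ of vertices with $\overline{G}-K$ disconnected, or $|G|-1$ if $\overline{G}$ is complete. *)

theory Defs
  imports Complex_Main
begin

definition simple_graph :: "'a set \<Rightarrow> ('a \<Rightarrow> 'a \<Rightarrow> bool) \<Rightarrow> bool" where
  "simple_graph V E \<longleftrightarrow> finite V \<and> V \<noteq> {} \<and>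
     (\<forall>x y. E x y \<longrightarrow> x \<in> V \<and> y \<in> V) \<and>
     (\<forall>x y. E x y \<longrightarrow> E y x) \<and> (\<forall>x. \<not> E x x)"

definition induced_edges :: "'a set \<Rightarrow> ('a \<Rightarrow> 'a \<Rightarrow> bool) \<Rightarrow> 'a \<Rightarrow> 'a \<Rightarrow> bool" where
  "induced_edges S E x y \<longleftrightarrow> x \<in> S \<and> y \<in> S \<and> E x y"

definition complement_edges :: "'a set \<Rightarrow> ('a \<Rightarrow> 'a \<Rightarrow> bool) \<Rightarrow> 'a \<Rightarrow> 'a \<Rightarrow> bool" where
  "complement_edges V E x y \<longleftrightarrow> x \<in> V \<and> y \<in> V \<and> x \<noteq> y \<and> \<not> E x y"

definition proper_colouring :: "'a set \<Rightarrow> ('a \<Rightarrow> 'a \<Rightarrow> bool) \<Rightarrow> nat \<Rightarrow> ('a \<Rightarrow> nat) \<Rightarrow> bool" where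
  "proper_colouring V E k c \<longleftrightarrow> c ` V \<subseteq> {..<k} \<and> (\<forall>x\<in>V. \<forall>y\<in>V. E x y \<longrightarrow> c x \<noteq> c y)"

definition chromatic_number :: "'a set \<Rightarrow> ('a \<Rightarrow> 'a \<Rightarrow> bool) \<Rightarrow> nat" where
  "chromatic_number V E = (LEAST k. \<exists>c. proper_colouring V E k c)"

definition is_clique :: "'a set \<Rightarrow> ('a \<Rightarrow> 'a \<Rightarrow> bool) \<Rightarrow> 'a set \<Rightarrow> bool" where
  "is_clique V E K \<longleftrightarrow> K \<subseteq> V \<and> (\<forall>x\<in>K. \<forall>y\<in>K. x \<noteq> y \<longrightarrow> E x y)"

definition clique_number :: "'a set \<Rightarrow> ('a \<Rightarrow> 'a \<Rightarrow> bool) \<Rightarrow> nat" where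
  "clique_number V E = Max {card K | K. is_clique V E K}"

definition degree :: "'a set \<Rightarrow> ('a \<Rightarrow> 'a \<Rightarrow> bool) \<Rightarrow> 'a \<Rightarrow> nat" where
  "degree V E v = card {u \<in> V. E v u}"

definition max_degree :: "'a set \<Rightarrow> ('a \<Rightarrow> 'a \<Rightarrow> bool) \<Rightarrow> nat" where
  "max_degree V E = Max (degree V E ` V)"

definition disconnected :: "'a set \<Rightarrow> ('a \<Rightarrow> 'a \<Rightarrow> bool) \<Rightarrow> bool" where
  "disconnected V E \<longleftrightarrow> (\<exists>u\<in>V. \<exists>v\<in>V. \<not> (induced_edges V E)\<^sup>*\<^sup>* u v)"

definition complete_graph :: "'a set \<Rightarrow> ('a \<Rightarrow> 'a \<Rightarrow> bool) \<Rightarrow> bool" where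
  "complete_graph V E \<longleftrightarrow> (\<forall>x\<in>V. \<forall>y\<in>V. x \<noteq> y \<longrightarrow> E x y)"

definition vertex_connectivity :: "'a set \<Rightarrow> ('a \<Rightarrow> 'a \<Rightarrow> bool) \<Rightarrow> nat" where
  "vertex_connectivity V E =
     (if complete_graph V E then card V - 1
      else Min {card K | K. K \<subseteq> V \<and> disconnected (V - K) E})"

end

theory Submission
  imports Defs
begin

(*
  For a graph S and a subset Y of its vertices we show
    (1)  4 chi(S) <= 2 omega(S) + Delta(S) + |S| + 1,
    (2)  4 chi(S) + |Y| <= 2 omega(S) + Delta(S) + |S| + 1 + 3 chi(Y).
  Deleting a maximal independent set I costs at most one colour and, as I dominates the rest,
  lowers the maximum degree by at least one.  So (1) follows by induction on |S| once some I has
  at least three vertices.  Otherwise every colour class of an optimal colouring has at most two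
  vertices, and recolouring around a vertex z that has a colour of its own produces two cliques of
  total size at least 2 |singleton classes| + |non-neighbours of z|, which gives (1) directly.
  Inequality (2) follows from (1) by induction on |Y|, deleting a maximal independent set that
  contains a colour class of an optimal colouring of Y.
  Finally, removing a minimum vertex cut K of the complement leaves the join of two graphs A and B,
  on which chi, omega and Delta add up; summing (2) over A and B and paying |K| colours and at
  most |K| vertices of H gives the theorem.
*)

lemma card_Diff_add_card: "finite S \<Longrightarrow> I \<subseteq> S \<Longrightarrow> card S = card (S - I) + card I"
  by (metis card_Diff_subset card_mono finite_subset le_add_diff_inverse2)

lemma chromatic_number_induced_edges: "chromatic_number S (induced_edges S E) = chromatic_number S E"
  unfolding chromatic_number_def proper_colouring_def induced_edges_def by simp

lemma induced_edges_pair_reachable: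
  assumes "(induced_edges {x, y} F)\<^sup>*\<^sup>* x w" "\<not> F x y"
  shows "w = x"
  using assms by (induction rule: rtranclp_induct) (auto simp: induced_edges_def)

lemma vertex_connectivity_separator:
  assumes "finite V" "\<not> complete_graph V F"
  obtains K where "K \<subseteq> V" "disconnected (V - K) F" "card K = vertex_connectivity V F"
proof -
  let ?sizes = "{card K | K. K \<subseteq> V \<and> disconnected (V - K) F}"
  obtain x y where xy: "x \<in> V" "y \<in> V" "x \<noteq> y" "\<not> F x y"
    using assms(2) unfolding complete_graph_def by blast
  have "\<not> (induced_edges {x, y} F)\<^sup>*\<^sup>* x y"
    using induced_edges_pair_reachable xy(3,4) by metis
  then have "disconnected {x, y} F" unfolding disconnected_def by blast
  moreover have "V - (V - {x, y}) = {x, y}" using xy by auto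
  ultimately have "disconnected (V - (V - {x, y})) F" by simp
  then have "?sizes \<noteq> {}" by blast
  moreover have "finite ?sizes" using assms(1) by (auto intro: finite_subset[of _ "card ` Pow V"])
  ultimately have "Min ?sizes \<in> ?sizes" by (rule Min_in[rotated])
  then show thesis
    using that assms(2) unfolding vertex_connectivity_def by auto
qed

lemma complement_disconnected_join:
  assumes "W \<subseteq> V" "disconnected W (complement_edges V E)"
  obtains A B where "A \<union> B = W" "A \<inter> B = {}" "A \<noteq> {}" "B \<noteq> {}" "\<forall>a\<in>A. \<forall>b\<in>B. E a b"
proof -
  let ?R = "induced_edges W (complement_edges V E)"
  obtain u v where uv: "u \<in> W" "v \<in> W" "\<not> ?R\<^sup>*\<^sup>* u v"
    using assms(2) unfolding disconnected_def by blast
  define A where "A = {w \<in> W. ?R\<^sup>*\<^sup>* u w}"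
  have "E a b" if "a \<in> A" "b \<in> W - A" for a b
  proof (rule ccontr)
    assume "\<not> E a b"
    moreover have "a \<noteq> b" using that by blast
    ultimately have "?R a b"
      using that assms(1) unfolding A_def induced_edges_def complement_edges_def by auto
    then have "?R\<^sup>*\<^sup>* u b" using that(1) unfolding A_def by auto
    then show False using that(2) unfolding A_def by blast
  qed
  moreover have "u \<in> A" "v \<in> W - A" using uv unfolding A_def by auto
  ultimately show thesis using that[of A "W - A"] unfolding A_def by blast
qed

locale loopless_graph =
  fixes E :: "'a \<Rightarrow> 'a \<Rightarrow> bool"
  assumes sym: "E x y \<Longrightarrow> E y x"
    and irrefl: "\<not> E x x"
begin

abbreviation chi :: "'a set \<Rightarrow> nat" where "chi S \<equiv> chromatic_number S E"
abbreviation omega :: "'a set \<Rightarrow> nat" where "omega S \<equiv> clique_number S E"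
abbreviation Delta :: "'a set \<Rightarrow> nat" where "Delta S \<equiv> max_degree S E"

definition proper_on :: "'a set \<Rightarrow> ('a \<Rightarrow> 'b) \<Rightarrow> bool" where
  "proper_on S c \<longleftrightarrow> (\<forall>x\<in>S. \<forall>y\<in>S. E x y \<longrightarrow> c x \<noteq> c y)"

definition independent :: "'a set \<Rightarrow> bool" where
  "independent S \<longleftrightarrow> (\<forall>x\<in>S. \<forall>y\<in>S. \<not> E x y)"

lemma proper_colouring_iff: "proper_colouring S E k c \<longleftrightarrow> c ` S \<subseteq> {..<k} \<and> proper_on S c"
  unfolding proper_colouring_def proper_on_def by blast

lemma chi_le: "proper_colouring S E k c \<Longrightarrow> chi S \<le> k"
  unfolding chromatic_number_def by (blast intro: Least_le)

lemma proper_on_compress: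
  assumes "finite S" "proper_on S c"
  shows "\<exists>c'. proper_colouring S E (card (c ` S)) c'"
proof -
  obtain g where g: "bij_betw g (c ` S) {0..<card (c ` S)}"
    using ex_bij_betw_finite_nat assms(1) by blast
  then have "proper_colouring S E (card (c ` S)) (g \<circ> c)"
    using assms(2) unfolding proper_colouring_iff proper_on_def bij_betw_def inj_on_def by auto
  then show ?thesis by blast
qed

lemma chi_le_card_image: "finite S \<Longrightarrow> proper_on S c \<Longrightarrow> chi S \<le> card (c ` S)"
  using proper_on_compress chi_le by blast

lemma proper_on_id: "proper_on S id"
  unfolding proper_on_def using irrefl by auto

lemma chi_le_card: "finite S \<Longrightarrow> chi S \<le> card S"
  using chi_le_card_image[OF _ proper_on_id] by simp

lemma exists_optimal_colouring:
  assumes "finite S"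
  shows "\<exists>c. proper_colouring S E (chi S) c"
  using proper_on_compress[OF assms proper_on_id] unfolding chromatic_number_def by (rule LeastI)

lemma chi_empty: "chi {} = 0"
  using chi_le_card[of "{}"] by simp

lemma chi_pos: "finite S \<Longrightarrow> S \<noteq> {} \<Longrightarrow> 1 \<le> chi S"
  using exists_optimal_colouring[of S] unfolding proper_colouring_def by (cases "chi S") auto

lemma chi_mono:
  assumes "finite S" "T \<subseteq> S"
  shows "chi T \<le> chi S"
proof -
  obtain c where "proper_colouring S E (chi S) c" using exists_optimal_colouring assms(1) by blast
  then have "proper_colouring T E (chi S) c" using assms(2) unfolding proper_colouring_def by blast
  then show ?thesis by (rule chi_le)
qed

lemma chi_independent: "independent I \<Longrightarrow> chi I \<le> 1"
  using chi_le[of I 1 "\<lambda>_. 0"] unfolding proper_colouring_def independent_def by auto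

lemma chi_Un_le:
  assumes "finite A" "finite B"
  shows "chi (A \<union> B) \<le> chi A + chi B"
proof -
  obtain a where a: "proper_colouring A E (chi A) a" using exists_optimal_colouring assms(1) by blast
  obtain b where b: "proper_colouring B E (chi B) b" using exists_optimal_colouring assms(2) by blast
  have "proper_colouring (A \<union> B) E (chi A + chi B) (\<lambda>x. if x \<in> A then a x else chi A + b x)"
    using a b unfolding proper_colouring_def by auto
  then show ?thesis by (rule chi_le)
qed

lemma chi_join:
  assumes "finite A" "finite B" "A \<inter> B = {}" "\<forall>a\<in>A. \<forall>b\<in>B. E a b"
  shows "chi A + chi B \<le> chi (A \<union> B)"
proof -
  obtain c where c: "proper_colouring (A \<union> B) E (chi (A \<union> B)) c"
    using exists_optimal_colouring assms by blast
  then have "proper_on A c" "proper_on B c" and range: "c ` (A \<union> B) \<subseteq> {..<chi (A \<union> B)}"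
    unfolding proper_colouring_iff proper_on_def by auto
  have disjoint: "c ` A \<inter> c ` B = {}"
    using c assms(4) unfolding proper_colouring_def by blast
  have "chi A + chi B \<le> card (c ` A) + card (c ` B)"
    by (intro add_mono chi_le_card_image) fact+
  also have "\<dots> = card (c ` (A \<union> B))"
    using disjoint assms(1,2) by (simp add: image_Un card_Un_disjoint)
  also have "\<dots> \<le> chi (A \<union> B)"
    using card_mono[OF _ range] by simp
  finally show ?thesis .
qed

lemma finite_clique_sizes: "finite S \<Longrightarrow> finite {card K | K. is_clique S E K}"
  unfolding is_clique_def
  by (rule finite_subset[of _ "card ` Pow S"]) auto

lemma card_le_omega: "finite S \<Longrightarrow> is_clique S E K \<Longrightarrow> card K \<le> omega S"
  unfolding clique_number_def using finite_clique_sizes by (intro Max_ge) auto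

lemma exists_maximum_clique:
  assumes "finite S"
  shows "\<exists>K. is_clique S E K \<and> card K = omega S"
proof -
  have "is_clique S E {}" by (simp add: is_clique_def)
  then have "{card K | K. is_clique S E K} \<noteq> {}" by blast
  from Max_in[OF finite_clique_sizes[OF assms] this] show ?thesis
    unfolding clique_number_def by auto
qed

lemma omega_mono:
  assumes "finite S" "T \<subseteq> S"
  shows "omega T \<le> omega S"
proof -
  obtain K where "is_clique T E K" "card K = omega T"
    using exists_maximum_clique assms finite_subset by blast
  then show ?thesis using card_le_omega[OF assms(1), of K] assms(2) by (auto simp: is_clique_def)
qed

lemma omega_join:
  assumes "finite A" "finite B" "A \<inter> B = {}" "\<forall>a\<in>A. \<forall>b\<in>B. E a b"
  shows "omega A + omega B \<le> omega (A \<union> B)"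
proof -
  obtain K where K: "is_clique A E K" "card K = omega A" using exists_maximum_clique assms(1) by blast
  obtain L where L: "is_clique B E L" "card L = omega B" using exists_maximum_clique assms(2) by blast
  have "is_clique (A \<union> B) E (K \<union> L)"
    using K(1) L(1) assms(4) sym unfolding is_clique_def by (auto simp: subset_iff)
  then have "card (K \<union> L) \<le> omega (A \<union> B)" using assms by (intro card_le_omega) auto
  moreover have "card (K \<union> L) = card K + card L"
    using K(1) L(1) assms(1-3) unfolding is_clique_def
    by (meson card_Un_disjoint disjoint_iff finite_subset subsetD)
  ultimately show ?thesis using K(2) L(2) by simp
qed

lemma degree_le_Delta: "finite S \<Longrightarrow> v \<in> S \<Longrightarrow> degree S E v \<le> Delta S"
  unfolding max_degree_def by (intro Max_ge) auto

lemma exists_max_degree_vertex: "finite S \<Longrightarrow> S \<noteq> {} \<Longrightarrow> \<exists>v\<in>S. degree S E v = Delta S"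
  unfolding max_degree_def by (metis Max_in finite_imageI image_iff image_is_empty)

lemma Delta_mono:
  assumes "finite S" "T \<subseteq> S" "T \<noteq> {}"
  shows "Delta T \<le> Delta S"
proof -
  have "finite T" using assms(1,2) by (rule finite_subset[rotated])
  obtain v where v: "v \<in> T" "degree T E v = Delta T"
    using exists_max_degree_vertex \<open>finite T\<close> assms(3) by blast
  have "degree T E v \<le> degree S E v"
    unfolding degree_def using assms(1,2) by (intro card_mono) auto
  then show ?thesis using v degree_le_Delta[OF assms(1), of v] assms(2) by auto
qed

lemma Delta_Diff_dominating:
  assumes "finite S" "I \<subseteq> S" "S - I \<noteq> {}" "\<forall>v\<in>S - I. \<exists>u\<in>I. E v u"
  shows "Delta (S - I) + 1 \<le> Delta S"
proof -
  obtain v where v: "v \<in> S - I" "degree (S - I) E v = Delta (S - I)"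
    using exists_max_degree_vertex assms(1,3) by blast
  obtain u where "u \<in> I" "E v u" using assms(4) v(1) by blast
  then have "{w \<in> S - I. E v w} \<subset> {w \<in> S. E v w}" using assms(2) by auto
  then have "degree (S - I) E v < degree S E v"
    unfolding degree_def using assms(1) by (intro psubset_card_mono) auto
  then show ?thesis using v degree_le_Delta[OF assms(1), of v] by simp
qed

lemma Delta_join:
  assumes "finite A" "finite B" "A \<inter> B = {}" "\<forall>a\<in>A. \<forall>b\<in>B. E a b" "A \<noteq> {}"
  shows "Delta A + card B \<le> Delta (A \<union> B)"
proof -
  obtain v where v: "v \<in> A" "degree A E v = Delta A" using exists_max_degree_vertex assms(1,5) by blast
  have "{w \<in> A \<union> B. E v w} = {w \<in> A. E v w} \<union> B" using v(1) assms(4) by auto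
  then have "degree (A \<union> B) E v = degree A E v + card B"
    unfolding degree_def using assms(1-3) by (simp add: card_Un_disjoint disjoint_iff)
  then show ?thesis using v degree_le_Delta[of "A \<union> B" v] assms(1,2) by simp
qed

definition non_neighbours :: "'a set \<Rightarrow> 'a \<Rightarrow> 'a set" where
  "non_neighbours S v = {u \<in> S. u \<noteq> v \<and> \<not> E v u}"

lemma card_eq_degree_non_neighbours:
  assumes "finite S" "v \<in> S"
  shows "card S = 1 + degree S E v + card (non_neighbours S v)"
proof -
  have "S = insert v ({u \<in> S. E v u} \<union> non_neighbours S v)"
    using assms(2) unfolding non_neighbours_def by auto
  moreover have "v \<notin> {u \<in> S. E v u} \<union> non_neighbours S v"
    using irrefl unfolding non_neighbours_def by auto
  moreover have "{u \<in> S. E v u} \<inter> non_neighbours S v = {}"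
    unfolding non_neighbours_def by auto
  moreover have "finite ({u \<in> S. E v u} \<union> non_neighbours S v)"
    using assms(1) unfolding non_neighbours_def by simp
  ultimately have "card S = Suc (card ({u \<in> S. E v u} \<union> non_neighbours S v))"
    by (metis card_insert_disjoint)
  also have "\<dots> = 1 + degree S E v + card (non_neighbours S v)"
    using assms(1) \<open>{u \<in> S. E v u} \<inter> non_neighbours S v = {}\<close>
    unfolding degree_def non_neighbours_def by (simp add: card_Un_disjoint)
  finally show ?thesis .
qed

lemma maximal_independent_extension:
  assumes "finite S" "C \<subseteq> S" "independent C"
  obtains I where "C \<subseteq> I" "I \<subseteq> S" "independent I" "\<forall>v\<in>S - I. \<exists>u\<in>I. E v u"
proof -
  let ?F = "{T. C \<subseteq> T \<and> T \<subseteq> S \<and> independent T}"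
  have "finite ?F" using assms(1) by (auto intro: finite_subset[of _ "Pow S"])
  then obtain I where I: "I \<in> ?F" "\<forall>T\<in>?F. I \<le> T \<longrightarrow> I = T"
    using finite_has_maximal2[of ?F C] assms(2,3) by auto
  have "\<exists>u\<in>I. E v u" if v: "v \<in> S - I" for v
  proof (rule ccontr)
    assume "\<not> (\<exists>u\<in>I. E v u)"
    then have "insert v I \<in> ?F" using I(1) v sym irrefl unfolding independent_def by blast
    then show False using I(2) v by blast
  qed
  then show thesis using that I(1) by blast
qed

lemma chi_le_Diff_independent:
  assumes "finite S" "independent I"
  shows "chi S \<le> chi (S - I) + 1"
proof -
  have "independent (S \<inter> I)" using assms(2) unfolding independent_def by blast
  have "chi S = chi ((S - I) \<union> (S \<inter> I))" by (simp add: Un_Diff_Int)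
  also have "\<dots> \<le> chi (S - I) + chi (S \<inter> I)" using assms(1) by (intro chi_Un_le) auto
  finally show ?thesis using chi_independent[OF \<open>independent (S \<inter> I)\<close>] by simp
qed

lemma exists_colour_class:
  assumes "finite Y" "Y \<noteq> {}"
  obtains C where "C \<subseteq> Y" "C \<noteq> {}" "independent C" "chi (Y - C) + 1 \<le> chi Y"
proof -
  obtain c where c: "proper_colouring Y E (chi Y) c" using exists_optimal_colouring assms(1) by blast
  define C where "C = {y \<in> Y. c y = chi Y - 1}"
  have "independent C" using c unfolding C_def independent_def proper_colouring_def by fastforce
  have "proper_colouring (Y - C) E (chi Y - 1) c"
    using c unfolding C_def proper_colouring_def by (auto simp: less_Suc_eq)
  then have "chi (Y - C) \<le> chi Y - 1" by (rule chi_le)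
  moreover have "1 \<le> chi Y" using chi_pos assms by blast
  moreover have "C \<noteq> {}" using calculation by auto
  moreover have "C \<subseteq> Y" unfolding C_def by auto
  ultimately show thesis using that \<open>independent C\<close> by simp
qed

definition alpha_le_2 :: "'a set \<Rightarrow> bool" where
  "alpha_le_2 S \<longleftrightarrow> (\<forall>x\<in>S. \<forall>y\<in>S. \<forall>z\<in>S. x \<noteq> y \<and> x \<noteq> z \<and> y \<noteq> z \<longrightarrow> E x y \<or> E x z \<or> E y z)"

lemma alpha_le_2D:
  assumes "alpha_le_2 S" "x \<in> S" "y \<in> S" "z \<in> S" "x \<noteq> y" "x \<noteq> z" "y \<noteq> z"
    and "\<not> E x y" "\<not> E y z"
  shows "E x z"
  using assms unfolding alpha_le_2_def by blast

lemma non_neighbours_clique: "alpha_le_2 S \<Longrightarrow> v \<in> S \<Longrightarrow> is_clique S E (non_neighbours S v)"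
  unfolding alpha_le_2_def is_clique_def non_neighbours_def by (auto 0 4)

lemma proper_on_fun_upd:
  assumes "proper_on S c" "\<And>y. y \<in> S \<Longrightarrow> c y = col \<Longrightarrow> \<not> E x y"
  shows "proper_on S (c(x := col))"
  using assms sym[of _ x] unfolding proper_on_def by (auto simp: fun_upd_def)

end

subsection \<open>Graphs without independent triples\<close>

locale alpha_le_2_optimal_colouring = loopless_graph +
  fixes S :: "'a set" and c :: "'a \<Rightarrow> nat"
  assumes finite: "finite S"
    and alpha: "alpha_le_2 S"
    and proper: "proper_on S c"
    and optimal: "card (c ` S) = chi S"
begin

lemma no_colour_saving:
  assumes "proper_on S c'" "z \<in> S" "c' ` S \<subseteq> c ` S - {c z}"
  shows False
proof -
  have "chi S \<le> card (c' ` S)" using chi_le_card_image finite assms(1) by blast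
  also have "\<dots> \<le> card (c ` S - {c z})" using assms(3) finite by (intro card_mono) auto
  also have "\<dots> = chi S - 1" using optimal assms(2) finite by simp
  also have "\<dots> < chi S" using chi_pos[OF finite] assms(2) by fastforce
  finally show False by simp
qed

definition singletons :: "'a set" where
  "singletons = {x \<in> S. \<forall>y\<in>S. c y = c x \<longrightarrow> y = x}"

definition mate :: "'a \<Rightarrow> 'a" where
  "mate x = (SOME y. y \<in> S \<and> y \<noteq> x \<and> c y = c x)"

lemma singletonsD: "u \<in> singletons \<Longrightarrow> y \<in> S \<Longrightarrow> c y = c u \<Longrightarrow> y = u"
  unfolding singletons_def by blast

lemma singletons_subset: "singletons \<subseteq> S"
  unfolding singletons_def by blast

lemma finite_singletons: "finite singletons"
  using finite_subset[OF singletons_subset finite] .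

lemma mate_in_colour_class:
  assumes "x \<in> S - singletons"
  shows "mate x \<in> S - singletons" "mate x \<noteq> x" "c (mate x) = c x"
proof -
  have "\<exists>y. y \<in> S \<and> y \<noteq> x \<and> c y = c x" using assms unfolding singletons_def by auto
  then have *: "mate x \<in> S" "mate x \<noteq> x" "c (mate x) = c x"
    unfolding mate_def by (metis (mono_tags, lifting) someI_ex)+
  then show "mate x \<noteq> x" "c (mate x) = c x" by auto
  show "mate x \<in> S - singletons" using * assms unfolding singletons_def by auto
qed

lemma same_colour_non_adjacent: "x \<in> S \<Longrightarrow> y \<in> S \<Longrightarrow> c x = c y \<Longrightarrow> \<not> E x y"
  using proper unfolding proper_on_def by blast

lemma colour_class_pair:
  assumes "x \<in> S - singletons" "y \<in> S" "c y = c x"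
  shows "y = x \<or> y = mate x"
  using alpha mate_in_colour_class[OF assms(1)] assms same_colour_non_adjacent sym
  unfolding alpha_le_2_def by (metis DiffD1)

lemma singletons_adjacent:
  assumes "u \<in> singletons" "v \<in> singletons" "u \<noteq> v"
  shows "E u v"
proof (rule ccontr)
  assume "\<not> E u v"
  have "proper_on S (c(v := c u))"
    using proper singletonsD[OF assms(1)] \<open>\<not> E u v\<close> sym by (intro proper_on_fun_upd) blast+
  moreover have "v \<in> S" "(c(v := c u)) ` S \<subseteq> c ` S - {c v}"
    using assms singletonsD[OF assms(2)] unfolding singletons_def by auto
  ultimately show False by (rule no_colour_saving)
qed

lemma card_non_singletons: "card (S - singletons) = 2 * card (c ` (S - singletons))"
proof -
  let ?P = "S - singletons"
  have class_card: "card {x \<in> ?P. c x = i} = 2" if "i \<in> c ` ?P" for i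
  proof -
    obtain x where x: "x \<in> ?P" "i = c x" using \<open>i \<in> c ` ?P\<close> by blast
    have "{y \<in> ?P. c y = i} = {x, mate x}"
    proof
      show "{y \<in> ?P. c y = i} \<subseteq> {x, mate x}" using colour_class_pair[OF x(1)] x(2) by auto
      show "{x, mate x} \<subseteq> {y \<in> ?P. c y = i}" using mate_in_colour_class[OF x(1)] x by auto
    qed
    then show ?thesis using mate_in_colour_class(2)[OF x(1)] by simp
  qed
  have "card ?P = (\<Sum>i\<in>c ` ?P. card {x \<in> ?P. c x = i})"
    unfolding card_eq_sum by (rule sum.image_gen) (simp add: finite)
  also have "\<dots> = (\<Sum>i\<in>c ` ?P. 2)" using class_card by simp
  finally show ?thesis by simp
qed

lemma two_chi_eq: "2 * chi S = card S + card singletons"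
proof -
  let ?P = "S - singletons"
  have "inj_on c singletons"
  proof (rule inj_onI)
    fix x y assume "x \<in> singletons" "y \<in> singletons" "c x = c y"
    then show "x = y" using singletonsD[of x y] singletons_subset by auto
  qed
  then have "card (c ` singletons) = card singletons" by (rule card_image)
  moreover have "c ` S = c ` singletons \<union> c ` ?P"
    using singletons_subset by (simp add: Un_absorb1 flip: image_Un)
  moreover have "c ` singletons \<inter> c ` ?P = {}"
  proof (rule equals0I)
    fix i assume "i \<in> c ` singletons \<inter> c ` ?P"
    then obtain u p where "u \<in> singletons" "p \<in> ?P" "i = c u" "i = c p" by (elim IntE imageE) blast
    then show False using singletonsD[of u p] by auto
  qed
  moreover have "card S = card singletons + card ?P"
    using card_Diff_add_card[OF finite singletons_subset] by simp
  ultimately show ?thesis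
    using optimal finite_singletons finite card_non_singletons by (simp add: card_Un_disjoint)
qed

context
  fixes z assumes z: "z \<in> singletons"
begin

lemma non_neighbours_not_singletons: "non_neighbours S z \<subseteq> S - singletons"
  using singletons_adjacent[OF z] unfolding non_neighbours_def by blast

lemma adjacent_mate:
  assumes w: "w \<in> non_neighbours S z"
  shows "E z (mate w)"
proof -
  have w': "w \<in> S - singletons" using w non_neighbours_not_singletons by blast
  have "z \<in> S" using z singletons_subset by blast
  moreover have "mate w \<noteq> z" using mate_in_colour_class(1)[OF w'] z by blast
  moreover have "\<not> E w (mate w)" using mate_in_colour_class[OF w'] w' same_colour_non_adjacent by auto
  moreover have "z \<noteq> w" "\<not> E z w" using w unfolding non_neighbours_def by auto
  ultimately show ?thesis
    using alpha_le_2D[OF alpha, of z w "mate w"] mate_in_colour_class[OF w'] w' by auto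
qed

lemma non_neighbours_colours_distinct:
  assumes "q \<in> non_neighbours S z" "w \<in> non_neighbours S z" "q \<noteq> w"
  shows "c q \<noteq> c w"
proof
  assume "c q = c w"
  then have "q = mate w"
    using colour_class_pair[of w q] assms non_neighbours_not_singletons
    unfolding non_neighbours_def by blast
  then show False using adjacent_mate[OF assms(2)] assms(1) unfolding non_neighbours_def by blast
qed

lemma singleton_adjacent_mate:
  assumes w: "w \<in> non_neighbours S z" and u: "u \<in> singletons" "u \<noteq> z"
  shows "E u (mate w)"
proof (rule ccontr)
  assume non_adjacent: "\<not> E u (mate w)"
  let ?c1 = "c(mate w := c u)"
  let ?c2 = "?c1(z := c w)"
  have w': "w \<in> S - singletons" using w non_neighbours_not_singletons by blast
  have S: "z \<in> S" "u \<in> S" using z u singletons_subset by auto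
  have colours: "c w \<noteq> c z" "c u \<noteq> c z" "c u \<noteq> c w"
    using singletonsD[OF z, of w] singletonsD[OF u(1), of z] singletonsD[OF u(1), of w] w' S z u by auto
  have "proper_on S ?c1"
    using singletonsD[OF u(1)] non_adjacent sym by (intro proper_on_fun_upd proper) blast
  then have "proper_on S ?c2"
  proof (rule proper_on_fun_upd)
    fix y assume "y \<in> S" "?c1 y = c w"
    then have "y = w" using colour_class_pair[OF w', of y] colours(3) by (auto split: if_splits)
    then show "\<not> E z y" using w unfolding non_neighbours_def by blast
  qed
  moreover have "?c2 ` S \<subseteq> c ` S - {c z}"
    using colours singletonsD[OF z] w' S by auto
  ultimately show False using S(1) no_colour_saving by blast
qed

lemma mates_adjacent:
  assumes q: "q \<in> non_neighbours S z" and w: "w \<in> non_neighbours S z" "q \<noteq> w"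
    and u: "u \<in> singletons" "u \<noteq> z" "\<not> E u q"
  shows "E (mate q) (mate w)"
proof (rule ccontr)
  assume non_adjacent: "\<not> E (mate q) (mate w)"
  let ?c1 = "c(q := c u)"
  let ?c2 = "?c1(mate w := c q)"
  let ?c3 = "?c2(z := c w)"
  have q': "q \<in> S - singletons" and w': "w \<in> S - singletons"
    using q w non_neighbours_not_singletons by auto
  have S: "z \<in> S" "u \<in> S" using z u singletons_subset by auto
  have "c w \<noteq> c z" using singletonsD[OF z, of w] w' z by auto
  moreover have "c q \<noteq> c z" using singletonsD[OF z, of q] q' z by auto
  moreover have "c u \<noteq> c z" using singletonsD[OF u(1), of z] S u(2) by auto
  moreover have "c u \<noteq> c w" using singletonsD[OF u(1), of w] w' u(1) by auto
  moreover have "c u \<noteq> c q" using singletonsD[OF u(1), of q] q' u(1) by auto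
  moreover have "c q \<noteq> c w" using non_neighbours_colours_distinct[OF q w] .
  ultimately have colours: "c w \<noteq> c z" "c q \<noteq> c z" "c u \<noteq> c z" "c u \<noteq> c w" "c u \<noteq> c q" "c q \<noteq> c w"
    by blast+
  have "mate w \<noteq> q" using adjacent_mate[OF w(1)] q unfolding non_neighbours_def by blast
  have "proper_on S ?c1"
    using singletonsD[OF u(1)] u(3) sym by (intro proper_on_fun_upd proper) blast
  then have "proper_on S ?c2"
  proof (rule proper_on_fun_upd)
    fix y assume "y \<in> S" "?c1 y = c q"
    then have "y = mate q" using colour_class_pair[OF q', of y] colours(5) by (auto split: if_splits)
    then show "\<not> E (mate w) y" using non_adjacent sym by blast
  qed
  then have "proper_on S ?c3"
  proof (rule proper_on_fun_upd)
    fix y assume "y \<in> S" "?c2 y = c w"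
    then have "y = w"
      using colour_class_pair[OF w', of y] colours(4,6) \<open>mate w \<noteq> q\<close> by (auto split: if_splits)
    then show "\<not> E z y" using w unfolding non_neighbours_def by blast
  qed
  moreover have "?c3 ` S \<subseteq> c ` S - {c z}"
    using colours singletonsD[OF z] q' w' S by auto
  ultimately show False using S(1) no_colour_saving by blast
qed

definition missing :: "'a set" where
  "missing = {w \<in> non_neighbours S z. \<exists>u \<in> singletons - {z}. \<not> E u w}"

lemma clique_singletons_not_missing:
  "is_clique S E ((singletons - {z}) \<union> (non_neighbours S z - missing))"
proof -
  have cross: "E u w" if "u \<in> singletons - {z}" "w \<in> non_neighbours S z - missing" for u w
    using that unfolding missing_def by blast
  have "is_clique S E (non_neighbours S z)"
    using non_neighbours_clique[OF alpha] z singletons_subset by blast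
  then show ?thesis
    using singletons_adjacent singletons_subset cross sym
    unfolding is_clique_def by (smt (verit) Diff_iff Un_iff subset_iff)
qed

lemma clique_singletons_mates:
  assumes B: "B \<subseteq> non_neighbours S z" "\<forall>a\<in>B. \<forall>b\<in>B. a \<noteq> b \<longrightarrow> a \<in> missing \<or> b \<in> missing"
  shows "is_clique S E (singletons \<union> mate ` B)"
proof -
  have mates_S: "mate ` B \<subseteq> S"
    using B(1) non_neighbours_not_singletons mate_in_colour_class(1) by blast
  have singleton_mate: "E u (mate b)" if "u \<in> singletons" "b \<in> B" for u b
    using adjacent_mate singleton_adjacent_mate B(1) that by (cases "u = z") auto
  have mate_mate: "E (mate a) (mate b)" if "a \<in> B" "b \<in> B" "a \<noteq> b" "a \<in> missing" for a b
    using that B(1) mates_adjacent unfolding missing_def by blast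
  show ?thesis
    unfolding is_clique_def
    using singletons_adjacent singletons_subset mates_S singleton_mate mate_mate B(2) sym
    by (smt (verit) Un_iff image_iff subset_iff)
qed

lemma card_singletons_Un_mates:
  assumes "B \<subseteq> non_neighbours S z"
  shows "card (singletons \<union> mate ` B) = card singletons + card B"
proof -
  have "inj_on mate B"
  proof (rule inj_onI)
    fix a b assume "a \<in> B" "b \<in> B" "mate a = mate b"
    then show "a = b"
      using non_neighbours_colours_distinct assms mate_in_colour_class(3) non_neighbours_not_singletons by (metis subsetD)
  qed
  moreover have "singletons \<inter> mate ` B = {}"
    using assms non_neighbours_not_singletons mate_in_colour_class(1) by blast
  moreover have "finite singletons" using finite_singletons .
  moreover have "finite B" using assms finite unfolding non_neighbours_def by (simp add: finite_subset)
  ultimately show ?thesis by (simp add: card_Un_disjoint card_image)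
qed

lemma card_singletons_non_neighbours: "2 * card singletons + card (non_neighbours S z) \<le> 2 * omega S"
proof -
  let ?N = "non_neighbours S z"
  have "finite ?N" using finite unfolding non_neighbours_def by simp
  have "missing \<subseteq> ?N" unfolding missing_def by blast
  then have card_N: "card ?N = card missing + card (?N - missing)"
    using card_Diff_add_card[OF \<open>finite ?N\<close>] by simp
  show ?thesis
  proof (cases "?N - missing = {}")
    case True
    then have "\<forall>a\<in>?N. \<forall>b\<in>?N. a \<noteq> b \<longrightarrow> a \<in> missing \<or> b \<in> missing" by blast
    then have "card singletons + card ?N \<le> omega S"
      using card_le_omega[OF finite clique_singletons_mates[OF order.refl]]
        card_singletons_Un_mates[OF order.refl] by simp
    then show ?thesis by simp
  next
    case False
    then obtain s where s: "s \<in> ?N - missing" by blast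
    let ?B = "insert s missing"
    have "?B \<subseteq> ?N" using s \<open>missing \<subseteq> ?N\<close> by blast
    moreover have "\<forall>a\<in>?B. \<forall>b\<in>?B. a \<noteq> b \<longrightarrow> a \<in> missing \<or> b \<in> missing" by blast
    ultimately have "card singletons + card ?B \<le> omega S"
      using card_le_omega[OF finite clique_singletons_mates] card_singletons_Un_mates by metis
    moreover have "card ?B = card missing + 1"
      using s \<open>missing \<subseteq> ?N\<close> \<open>finite ?N\<close> finite_subset by fastforce
    moreover have "card ((singletons - {z}) \<union> (?N - missing)) \<le> omega S"
      by (rule card_le_omega[OF finite clique_singletons_not_missing])
    moreover have "card ((singletons - {z}) \<union> (?N - missing)) = card singletons - 1 + card (?N - missing)"
    proof -
      have "(singletons - {z}) \<inter> (?N - missing) = {}" using non_neighbours_not_singletons by blast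
      moreover have "finite singletons" using finite_singletons .
      ultimately show ?thesis using \<open>finite ?N\<close> z by (simp add: card_Un_disjoint)
    qed
    moreover have "1 \<le> card singletons"
      using z finite_singletons by (metis One_nat_def Suc_leI card_gt_0_iff empty_iff)
    ultimately show ?thesis using card_N by linarith
  qed
qed

end

lemma exists_vertex_small_non_neighbourhood:
  assumes "S \<noteq> {}"
  obtains v where "v \<in> S" "2 * card singletons + card (non_neighbours S v) \<le> 2 * omega S"
proof (cases "singletons = {}")
  case True
  obtain v where "v \<in> S" using assms by blast
  then have "card (non_neighbours S v) \<le> omega S"
    using card_le_omega[OF finite non_neighbours_clique[OF alpha]] by blast
  then show thesis using that[of v] \<open>v \<in> S\<close> True by simp
next
  case False
  then obtain z where "z \<in> singletons" by blast
  then show thesis using that card_singletons_non_neighbours singletons_subset by blast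
qed

end

context loopless_graph
begin

theorem chromatic_bound_alpha_le_2:
  assumes "finite S" "alpha_le_2 S"
  shows "4 * chi S \<le> 2 * omega S + Delta S + card S + 1"
proof (cases "S = {}")
  case True
  then show ?thesis by (simp add: chi_empty)
next
  case False
  obtain c where c: "proper_colouring S E (chi S) c" using exists_optimal_colouring assms(1) by blast
  then have "card (c ` S) \<le> chi S" unfolding proper_colouring_def by (metis card_lessThan card_mono finite_lessThan)
  moreover have "proper_on S c" using c unfolding proper_colouring_iff by blast
  ultimately have "card (c ` S) = chi S" using chi_le_card_image[OF assms(1)] le_antisym by blast
  then interpret alpha_le_2_optimal_colouring E S c
    using assms \<open>proper_on S c\<close> by unfold_locales
  obtain v where v: "v \<in> S" "2 * card singletons + card (non_neighbours S v) \<le> 2 * omega S"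
    using exists_vertex_small_non_neighbourhood False by blast
  have "4 * chi S = 2 * card S + 2 * card singletons" using two_chi_eq by simp
  also have "\<dots> = card S + (1 + degree S E v + card (non_neighbours S v)) + 2 * card singletons"
    using card_eq_degree_non_neighbours[OF assms(1) v(1)] by simp
  also have "\<dots> \<le> 2 * omega S + Delta S + card S + 1"
    using v(2) degree_le_Delta[OF assms(1) v(1)] by simp
  finally show ?thesis .
qed

theorem chromatic_bound:
  assumes "finite S"
  shows "4 * chi S \<le> 2 * omega S + Delta S + card S + 1"
  using assms
proof (induction "card S" arbitrary: S rule: less_induct)
  case less
  show ?case
  proof (cases "alpha_le_2 S")
    case True
    then show ?thesis using chromatic_bound_alpha_le_2 less.prems by blast
  next
    case False
    then obtain x y w where triple: "x \<in> S" "y \<in> S" "w \<in> S" "x \<noteq> y" "x \<noteq> w" "y \<noteq> w"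
      "\<not> E x y" "\<not> E x w" "\<not> E y w"
      unfolding alpha_le_2_def by blast
    have "independent {x, y, w}"
      using triple sym irrefl unfolding independent_def by blast
    then obtain I where I: "{x, y, w} \<subseteq> I" "I \<subseteq> S" "independent I" "\<forall>v\<in>S - I. \<exists>u\<in>I. E v u"
      using maximal_independent_extension less.prems triple by (metis empty_subsetI insert_subset)
    have "3 \<le> card I"
      using card_mono[OF finite_subset[OF I(2) less.prems] I(1)] triple by simp
    show ?thesis
    proof (cases "S - I = {}")
      case True
      then have "chi S \<le> 1" using chi_independent I(2,3) by (metis Diff_eq_empty_iff subset_antisym)
      moreover have "card I \<le> card S" using card_mono[OF less.prems I(2)] .
      ultimately show ?thesis using \<open>3 \<le> card I\<close> by linarith
    next
      case False
      have "card (S - I) < card S"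
        using \<open>3 \<le> card I\<close> card_Diff_add_card[OF less.prems I(2)] by linarith
      then have "4 * chi (S - I) \<le> 2 * omega (S - I) + Delta (S - I) + card (S - I) + 1"
        using less.hyps less.prems by blast
      moreover have "chi S \<le> chi (S - I) + 1" using chi_le_Diff_independent less.prems I(3) .
      moreover have "omega (S - I) \<le> omega S" using omega_mono less.prems by blast
      moreover have "Delta (S - I) + 1 \<le> Delta S" using Delta_Diff_dominating[OF less.prems I(2) False I(4)] .
      ultimately show ?thesis
        using \<open>3 \<le> card I\<close> card_Diff_add_card[OF less.prems I(2)] by linarith
    qed
  qed
qed

theorem chromatic_bound_subset:
  assumes "finite S" "Y \<subseteq> S"
  shows "4 * chi S + card Y \<le> 2 * omega S + Delta S + card S + 1 + 3 * chi Y"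
  using assms
proof (induction "card Y" arbitrary: S Y rule: less_induct)
  case less
  note S = less.prems
  show ?case
  proof (cases "Y = {}")
    case True
    then show ?thesis using chromatic_bound[OF S(1)] by (simp add: chi_empty)
  next
    case False
    have "finite Y" using finite_subset[OF S(2,1)] .
    then obtain C where C: "C \<subseteq> Y" "C \<noteq> {}" "independent C" "chi (Y - C) + 1 \<le> chi Y"
      using exists_colour_class False by blast
    have "C \<subseteq> S" using C(1) S(2) by blast
    then obtain I where I: "C \<subseteq> I" "I \<subseteq> S" "independent I" "\<forall>v\<in>S - I. \<exists>u\<in>I. E v u"
      using maximal_independent_extension[OF S(1) _ C(3)] by blast
    have "chi (Y - I) \<le> chi (Y - C)" using \<open>finite Y\<close> I(1) by (intro chi_mono) auto
    then have "chi (Y - I) + 1 \<le> chi Y" using C(4) by simp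
    have "Y - (Y \<inter> I) = Y - I" by blast
    then have "card Y = card (Y - I) + card (Y \<inter> I)"
      using card_Diff_add_card[OF \<open>finite Y\<close>, of "Y \<inter> I"] by simp
    moreover have "card (Y \<inter> I) \<le> card I" using finite_subset[OF I(2) S(1)] by (simp add: card_mono)
    ultimately have card_Y: "card Y \<le> card (Y - I) + card I" by linarith
    show ?thesis
    proof (cases "S - I = {}")
      case True
      then have "chi S \<le> 1" using chi_independent I(2,3) by (metis Diff_eq_empty_iff subset_antisym)
      moreover have "card Y \<le> card S" using card_mono[OF S] .
      ultimately show ?thesis using chi_pos[OF \<open>finite Y\<close> False] by linarith
    next
      case False
      have "Y \<inter> I \<noteq> {}" using C(1,2) I(1) by blast
      then have "card (Y - I) < card Y" using \<open>finite Y\<close> by (intro psubset_card_mono) auto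
      moreover have "finite (S - I)" "Y - I \<subseteq> S - I" using S by auto
      ultimately have "4 * chi (S - I) + card (Y - I)
          \<le> 2 * omega (S - I) + Delta (S - I) + card (S - I) + 1 + 3 * chi (Y - I)"
        using less.hyps by blast
      moreover have "chi S \<le> chi (S - I) + 1" using chi_le_Diff_independent S(1) I(3) .
      moreover have "omega (S - I) \<le> omega S" using omega_mono S(1) by blast
      moreover have "Delta (S - I) + 1 \<le> Delta S" using Delta_Diff_dominating[OF S(1) I(2) False I(4)] .
      ultimately show ?thesis
        using \<open>chi (Y - I) + 1 \<le> chi Y\<close> card_Y card_Diff_add_card[OF S(1) I(2)] by linarith
    qed
  qed
qed

theorem chromatic_bound_join:
  assumes fin: "finite A" "finite B" and disjoint: "A \<inter> B = {}" and nonempty: "A \<noteq> {}" "B \<noteq> {}"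
    and join: "\<forall>a\<in>A. \<forall>b\<in>B. E a b" and Y: "Y \<subseteq> A \<union> B"
  shows "4 * chi (A \<union> B) + card Y \<le> 2 * omega (A \<union> B) + 2 * Delta (A \<union> B) + 2 + 3 * chi Y"
proof -
  have join': "\<forall>b\<in>B. \<forall>a\<in>A. E b a" using join sym by blast
  have Y_split: "Y = (Y \<inter> A) \<union> (Y \<inter> B)" "(Y \<inter> A) \<inter> (Y \<inter> B) = {}" using Y disjoint by auto
  have "4 * chi A + card (Y \<inter> A) \<le> 2 * omega A + Delta A + card A + 1 + 3 * chi (Y \<inter> A)"
    using chromatic_bound_subset[OF fin(1)] by blast
  moreover have "4 * chi B + card (Y \<inter> B) \<le> 2 * omega B + Delta B + card B + 1 + 3 * chi (Y \<inter> B)"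
    using chromatic_bound_subset[OF fin(2)] by blast
  moreover have "chi (A \<union> B) \<le> chi A + chi B" using chi_Un_le fin by blast
  moreover have "chi (Y \<inter> A) + chi (Y \<inter> B) \<le> chi Y"
    using chi_join[of "Y \<inter> A" "Y \<inter> B"] Y_split fin join by auto
  moreover have "card Y = card (Y \<inter> A) + card (Y \<inter> B)"
    using Y_split fin by (metis card_Un_disjoint finite_Int)
  moreover have "omega A + omega B \<le> omega (A \<union> B)" using omega_join fin disjoint join .
  moreover have "Delta A + card B \<le> Delta (A \<union> B)" using Delta_join fin disjoint join nonempty(1) .
  moreover have "Delta B + card A \<le> Delta (A \<union> B)"
    using Delta_join[OF fin(2,1) _ join' nonempty(2)] disjoint by (simp add: Un_commute Int_commute)
  ultimately show ?thesis by linarith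
qed

theorem chromatic_bound_connectivity:
  assumes V: "finite V" and S: "S \<subseteq> V" "S \<noteq> {}"
  shows "4 * chi V + card S
    \<le> 2 * omega V + 2 * Delta V + 2 + 3 * chi S + 5 * vertex_connectivity V (complement_edges V E)"
proof -
  have finS: "finite S" using finite_subset[OF S(1) V] .
  have "1 \<le> chi S" using chi_pos[OF finS S(2)] .
  show ?thesis
  proof (cases "complete_graph V (complement_edges V E)")
    case True
    then have "independent V"
      using irrefl unfolding complete_graph_def complement_edges_def independent_def by metis
    then have "chi V \<le> 1" by (rule chi_independent)
    moreover have "vertex_connectivity V (complement_edges V E) = card V - 1"
      using True unfolding vertex_connectivity_def by simp
    moreover have "card S \<le> card V" using card_mono[OF V S(1)] .
    moreover have "1 \<le> card S" using finS S(2) by (simp add: Suc_le_eq card_gt_0_iff)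
    ultimately show ?thesis using \<open>1 \<le> chi S\<close> by linarith
  next
    case False
    obtain K where K: "K \<subseteq> V" "disconnected (V - K) (complement_edges V E)"
        "card K = vertex_connectivity V (complement_edges V E)"
      by (rule vertex_connectivity_separator[OF V False])
    obtain A B where AB: "A \<union> B = V - K" "A \<inter> B = {}" "A \<noteq> {}" "B \<noteq> {}" "\<forall>a\<in>A. \<forall>b\<in>B. E a b"
      by (rule complement_disconnected_join[OF Diff_subset K(2)])
    have "A \<union> B \<subseteq> V" using AB(1) by blast
    then have fin: "finite A" "finite B" "finite K" using finite_subset[OF _ V] K(1) by auto
    let ?Y = "S - K"
    have "4 * chi (A \<union> B) + card ?Y \<le> 2 * omega (A \<union> B) + 2 * Delta (A \<union> B) + 2 + 3 * chi ?Y"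
      using AB(1) S(1) by (intro chromatic_bound_join[OF fin(1,2) AB(2-5)]) blast
    moreover have "chi V \<le> chi (A \<union> B) + card K"
    proof -
      have "V = (A \<union> B) \<union> K" using AB(1) K(1) by auto
      then have "chi V \<le> chi (A \<union> B) + chi K" using chi_Un_le[of "A \<union> B" K] fin by simp
      then show ?thesis using chi_le_card[OF fin(3)] by linarith
    qed
    moreover have "omega (A \<union> B) \<le> omega V" using omega_mono[OF V \<open>A \<union> B \<subseteq> V\<close>] .
    moreover have "Delta (A \<union> B) \<le> Delta V" using Delta_mono[OF V \<open>A \<union> B \<subseteq> V\<close>] AB(3) by blast
    moreover have "chi ?Y \<le> chi S" using chi_mono[OF finS] by blast
    moreover have "card S \<le> card ?Y + card K"
    proof -
      have "card S \<le> card (?Y \<union> K)" using finS fin(3) by (intro card_mono) auto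
      then show ?thesis using card_Un_le[of ?Y K] by linarith
    qed
    ultimately show ?thesis using K(3) by linarith
  qed
qed

end

theorem corollary5:
  fixes V :: "'a set" and E :: "'a \<Rightarrow> 'a \<Rightarrow> bool" and S :: "'a set"
  assumes "simple_graph V E"
    and "S \<subseteq> V" and "S \<noteq> {}"
  shows "real (chromatic_number V E)
     \<le> (real (clique_number V E) + real (max_degree V E) + 1) / 2
       + (5 * real (vertex_connectivity V (complement_edges V E))
          + 3 * real (chromatic_number S (induced_edges S E)) - real (card S)) / 4"
proof -
  interpret loopless_graph E
    using assms(1) unfolding simple_graph_def by unfold_locales auto
  have "finite V" using assms(1) unfolding simple_graph_def by blast
  from chromatic_bound_connectivity[OF this assms(2,3)]
  have "4 * real (chi V) + real (card S) \<le> 2 * real (omega V) + 2 * real (Delta V) + 2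
      + 3 * real (chi S) + 5 * real (vertex_connectivity V (complement_edges V E))"
    by (metis (mono_tags, lifting) of_nat_add of_nat_le_iff of_nat_mult of_nat_numeral of_nat_1)
  then show ?thesis unfolding chromatic_number_induced_edges by (simp add: field_simps)
qed

end
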